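(* Let $\mathfrak g$ be a nilpotent Lie algebra of nilindex $3$ (i.e. $\mathfrak g^3=0$) over a field of characteristic zero, let $\mathcal F_\bullet\mathfrak g$ be its standard filtration $\mathcal F_n\mathfrak g=\mathfrak g^n$, and let $R:\mathfrak g\to\mathfrak g$ be a Rota–Baxter operator of weight 1 preserving the filtration. Then the Rota–Baxter operator $\mathfrak R(x)=\log(\widehat{\mathcal R}(\exp(x)))$ on the group $(\mathfrak g,* )$ is given by $$\mathfrak R(x)=R(x)-\tfrac12 R([R(x),x]),\qquad x\in\mathfrak g.$$
   Context: $\mathfrak g^1=\mathfrak g$, $\mathfrak g^n=[\mathfrak g,\mathfrak g^{n-1}]$. Rota–Baxter operator of weight 1: linear $R$ with $[R(x),R(y)]=R([R(x),y]+[x,R(y)]+[x,y])$. Since $\mathfrak g$ is nilpotent, $\mathfrak g$ with the standard filtration is complete, so $\widehat{\mathfrak g}=\mathfrak g$. Filtration of $U(\mathfrak g)$: $\mathcal F_0U=U(\mathfrak g)$, $\mathcal F_nU$ spanned by $x_1\cdots x_k$ with $x_i\in\mathcal F_{n_i}\mathfrak g$, $\sum n_i\ge n$; $\widehat U(\mathfrak g)=\varprojlim U(\mathfrak g)/\mathcal F_nU(\mathfrak g)$ is a complete Hopf algebra containing $\mathfrak g$. $\mathcal R:U(\mathfrak g)\to U(\mathfrak g)$ is the linear map with $\mathcal R(1)=1$, $\mathcal R(x)=R(x)$, $\mathcal R(xh)=R(x)\mathcal R(h)-\mathcal R([R(x),h])$; it preserves the filtration and induces $\widehat{\mathcal R}$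 on $\widehat U(\mathfrak g)$. $\exp(x)=\sum_n x^n/n!$ is a bijection from $\mathfrak g$ onto the group $\mathbb G$ of nonzero group-like elements of $\widehat U(\mathfrak g)$, with inverse $\log$; $\widehat{\mathcal R}(\mathbb G)\subset\mathbb G$. The group $(\mathfrak g,* )$ is given by $x*y=\log(\exp(x)\exp(y))$, which here equals $x+y+\frac12[x,y]$. *)

theory Defs
  imports Main "HOL.Vector_Spaces" "HOL-Library.Poly_Mapping"
begin

definition lie_algebra :: "('k::field \<Rightarrow> 'g::ab_group_add \<Rightarrow> 'g) \<Rightarrow> ('g \<Rightarrow> 'g \<Rightarrow> 'g) \<Rightarrow> bool" where
  "lie_algebra sc br \<longleftrightarrow> Vector_Spaces.vector_space sc
     \<and> (\<forall>x y z. br (x + y) z = br x z + br y z)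
     \<and> (\<forall>x y z. br x (y + z) = br x y + br x z)
     \<and> (\<forall>c x y. br (sc c x) y = sc c (br x y))
     \<and> (\<forall>c x y. br x (sc c y) = sc c (br x y))
     \<and> (\<forall>x. br x x = 0)
     \<and> (\<forall>x y z. br x (br y z) + br y (br z x) + br z (br x y) = 0)"

fun lcs :: "('k::field \<Rightarrow> 'g::ab_group_add \<Rightarrow> 'g) \<Rightarrow> ('g \<Rightarrow> 'g \<Rightarrow> 'g) \<Rightarrow> nat \<Rightarrow> 'g set" where
  "lcs sc br 0 = UNIV"
| "lcs sc br (Suc 0) = UNIV"
| "lcs sc br (Suc (Suc n)) = module.span sc {br x y | x y. y \<in> lcs sc br (Suc n)}"

definition rota_baxter_w1 :: "('g \<Rightarrow> 'g \<Rightarrow> 'g::ab_group_add) \<Rightarrow> ('g \<Rightarrow> 'g) \<Rightarrow> bool" where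
  "rota_baxter_w1 br R \<longleftrightarrow>
     (\<forall>x y. br (R x) (R y) = R (br (R x) y + br x (R y) + br x y))"

section \<open>Free associative algebra on the set g (finitely supported functions on words)\<close>

definition fw :: "'g list \<Rightarrow> ('g list \<Rightarrow>\<^sub>0 'k::comm_ring_1)" where
  "fw w = Poly_Mapping.single w 1"

definition fsmul :: "'k::comm_ring_1 \<Rightarrow> ('g list \<Rightarrow>\<^sub>0 'k) \<Rightarrow> ('g list \<Rightarrow>\<^sub>0 'k)" where
  "fsmul c p = Poly_Mapping.map (\<lambda>a. c * a) p"

definition fmul :: "('g list \<Rightarrow>\<^sub>0 'k::comm_ring_1) \<Rightarrow> ('g list \<Rightarrow>\<^sub>0 'k) \<Rightarrow> ('g list \<Rightarrow>\<^sub>0 'k)" where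
  "fmul p q = (\<Sum>u\<in>Poly_Mapping.keys p. \<Sum>v\<in>Poly_Mapping.keys q. Poly_Mapping.single (u @ v) (Poly_Mapping.lookup p u * Poly_Mapping.lookup q v))"

text \<open>Generators of the defining two-sided ideal: linearity of letters (giving the tensor
  algebra T(g)) and the relations x y - y x - [x,y].\<close>
definition env_gens :: "('k::field \<Rightarrow> 'g::ab_group_add \<Rightarrow> 'g) \<Rightarrow> ('g \<Rightarrow> 'g \<Rightarrow> 'g) \<Rightarrow> ('g list \<Rightarrow>\<^sub>0 'k) set" where
  "env_gens sc br =
     {fw [x + y] - fw [x] - fw [y] | x y. True}
   \<union> {fw [sc c x] - fsmul c (fw [x]) | c x. True}
   \<union> {fw [x, y] - fw [y, x] - fw [br x y] | x y. True}"

definition env_ideal :: "('k::field \<Rightarrow> 'g::ab_group_add \<Rightarrow> 'g) \<Rightarrow> ('g \<Rightarrow> 'g \<Rightarrow> 'g) \<Rightarrow> ('g list \<Rightarrow>\<^sub>0 'k) set" where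
  "env_ideal sc br = module.span fsmul
     {fmul (fmul (fw u) r) (fw v) | u v r. r \<in> env_gens sc br}"

text \<open>Preimage in the free algebra of the filtration piece F_n U(g): spanned by words
  x_1...x_k with x_i in g^(n_i) and n_1+...+n_k >= n, plus the ideal.\<close>
definition filt_words :: "('k::field \<Rightarrow> 'g::ab_group_add \<Rightarrow> 'g) \<Rightarrow> ('g \<Rightarrow> 'g \<Rightarrow> 'g) \<Rightarrow> nat \<Rightarrow> ('g list \<Rightarrow>\<^sub>0 'k) set" where
  "filt_words sc br n = module.span fsmul
     {fw w | w. \<exists>ns. length ns = length w \<and> (\<forall>i<length w. w ! i \<in> lcs sc br (ns ! i))
                   \<and> n \<le> sum_list ns}"

text \<open>p and q define the same element of U(g)/F_n U(g).\<close>
definition eq_mod :: "('k::field \<Rightarrow> 'g::ab_group_add \<Rightarrow> 'g) \<Rightarrow> ('g \<Rightarrow> 'g \<Rightarrow> 'g) \<Rightarrow> nat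
    \<Rightarrow> ('g list \<Rightarrow>\<^sub>0 'k) \<Rightarrow> ('g list \<Rightarrow>\<^sub>0 'k) \<Rightarrow> bool" where
  "eq_mod sc br n p q \<longleftrightarrow>
     (\<exists>a c. a \<in> filt_words sc br n \<and> c \<in> env_ideal sc br \<and> p - q = a + c)"

section \<open>Completion: an element of \<open>\<widehat>U(g)\<close> is represented by a sequence z with z n
  representing its image in U/F_n U. exp and log.\<close>

definition exp_seq :: "'g \<Rightarrow> nat \<Rightarrow> ('g list \<Rightarrow>\<^sub>0 'k::field_char_0)" where
  "exp_seq x n = (\<Sum>k<n. fsmul (1 / fact k) (fw (replicate k x)))"

definition log_hat :: "('k::field_char_0 \<Rightarrow> 'g::ab_group_add \<Rightarrow> 'g) \<Rightarrow> ('g \<Rightarrow> 'g \<Rightarrow> 'g)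
    \<Rightarrow> (nat \<Rightarrow> ('g list \<Rightarrow>\<^sub>0 'k)) \<Rightarrow> 'g" where
  "log_hat sc br z = (THE y. \<forall>n. eq_mod sc br n (exp_seq y n) (z n))"

text \<open>On words: R(1) = 1, R(x h) = R(x) R(h) - R([R(x), h]), where the commutator
  [R(x), y_1...y_k] is expanded (as it is in U(g)) as the sum over i of the words
  y_1...[R(x),y_i]...y_k.\<close>
fun calR_n :: "('g \<Rightarrow> 'g \<Rightarrow> 'g) \<Rightarrow> ('g \<Rightarrow> 'g) \<Rightarrow> nat \<Rightarrow> 'g list \<Rightarrow> ('g list \<Rightarrow>\<^sub>0 'k::comm_ring_1)" where
  "calR_n br R 0 w = fw []"
| "calR_n br R (Suc n) [] = fw []"
| "calR_n br R (Suc n) (x # w) =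
     fmul (fw [R x]) (calR_n br R n w)
     - (\<Sum>i<length w. calR_n br R n (w[i := br (R x) (w ! i)]))"

definition calR_word :: "('g \<Rightarrow> 'g \<Rightarrow> 'g) \<Rightarrow> ('g \<Rightarrow> 'g) \<Rightarrow> 'g list \<Rightarrow> ('g list \<Rightarrow>\<^sub>0 'k::comm_ring_1)" where
  "calR_word br R w = calR_n br R (length w) w"

definition calR :: "('g \<Rightarrow> 'g \<Rightarrow> 'g) \<Rightarrow> ('g \<Rightarrow> 'g) \<Rightarrow> ('g list \<Rightarrow>\<^sub>0 'k::comm_ring_1) \<Rightarrow> ('g list \<Rightarrow>\<^sub>0 'k)" where
  "calR br R p = (\<Sum>w\<in>Poly_Mapping.keys p. fsmul (Poly_Mapping.lookup p w) (calR_word br R w))"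

definition calR_hat :: "('g \<Rightarrow> 'g \<Rightarrow> 'g) \<Rightarrow> ('g \<Rightarrow> 'g)
    \<Rightarrow> (nat \<Rightarrow> ('g list \<Rightarrow>\<^sub>0 'k::comm_ring_1)) \<Rightarrow> (nat \<Rightarrow> ('g list \<Rightarrow>\<^sub>0 'k))" where
  "calR_hat br R z = (\<lambda>n. calR br R (z n))"

end

theory Submission
  imports Defs
begin

(*
  On words, the recursion defining calR only brackets with R x and with R kappa, where
  kappa = [R x, x] lies in g^2.  As g^3 = 0 and R preserves g^2, the elements of g^2 are central:
  R kappa acts by zero, and R x sends x to kappa and kappa to 0.  Hence, modulo the defining ideal
  of U(g), calR (x^a) is a polynomial in rho = R x and the central element sigma = R kappa,
  namely the sum over m of a! / ((a - 2m)! m!) (-1/2)^m rho^(a - 2m) sigma^m.  Weighted by 1/a!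
  and summed over a < n, this gives the terms (-1/2)^m / (j! m!) rho^j sigma^m with j + 2m < n,
  while exp (rho - sigma/2) truncated at n gives the same terms with j + m < n.  The difference
  lies in F_n U, since rho has degree 1 and sigma degree 2.  Finally, modulo F_3 U the logarithm
  is the linear functional a |-> a, ab |-> [a, b]/2, so the limit is rho - sigma/2.
*)

section \<open>Linear maps out of the free algebra\<close>

lemma lookup_fsmul [simp]: "Poly_Mapping.lookup (fsmul c p) w = c * Poly_Mapping.lookup p w"
  unfolding fsmul_def by (simp add: Poly_Mapping.map.rep_eq when_def)

lemma lookup_fw:
  "Poly_Mapping.lookup (fw w :: 'g list \<Rightarrow>\<^sub>0 'k::comm_ring_1) v = (if v = w then 1 else 0)"
  unfolding fw_def by (simp add: lookup_single when_def)

lemma keys_fw [simp]: "Poly_Mapping.keys (fw w :: 'g list \<Rightarrow>\<^sub>0 'k::comm_ring_1) = {w}"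
  unfolding fw_def by simp

lemma fsmul_fw: "fsmul c (fw w) = Poly_Mapping.single w c"
  by (rule poly_mapping_eqI) (simp add: lookup_fw lookup_single when_def)

interpretation fsmul: module "fsmul :: 'k::comm_ring_1 \<Rightarrow> ('g list \<Rightarrow>\<^sub>0 'k) \<Rightarrow> _"
  by unfold_locales (auto intro!: poly_mapping_eqI simp: lookup_add algebra_simps)

definition word_ext ::
    "('k::comm_ring_1 \<Rightarrow> 'b \<Rightarrow> 'b) \<Rightarrow> ('g list \<Rightarrow> 'b) \<Rightarrow> ('g list \<Rightarrow>\<^sub>0 'k) \<Rightarrow> 'b::ab_group_add"
  where "word_ext S f p = (\<Sum>w\<in>Poly_Mapping.keys p. S (Poly_Mapping.lookup p w) (f w))"

lemma word_ext_superset: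
  assumes "module S" "finite K" "Poly_Mapping.keys p \<subseteq> K"
  shows "word_ext S f p = (\<Sum>w\<in>K. S (Poly_Mapping.lookup p w) (f w))"
proof -
  interpret module S by fact
  show ?thesis unfolding word_ext_def
    by (rule sum.mono_neutral_left) (use assms in \<open>auto simp: in_keys_iff\<close>)
qed

lemma module_hom_word_ext:
  fixes S :: "'k::comm_ring_1 \<Rightarrow> 'b \<Rightarrow> 'b::ab_group_add" and f :: "'g list \<Rightarrow> 'b"
  assumes "module S"
  shows "module_hom fsmul S (word_ext S f)"
proof -
  interpret S: module S by fact
  show ?thesis
  proof
    fix p q :: "'g list \<Rightarrow>\<^sub>0 'k"
    let ?K = "Poly_Mapping.keys p \<union> Poly_Mapping.keys q"
    have "word_ext S f (p + q) = (\<Sum>w\<in>?K. S (Poly_Mapping.lookup (p + q) w) (f w))"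
      by (rule word_ext_superset[OF assms]) (use keys_add[of p q] in auto)
    also have "\<dots> = (\<Sum>w\<in>?K. S (Poly_Mapping.lookup p w) (f w))
        + (\<Sum>w\<in>?K. S (Poly_Mapping.lookup q w) (f w))"
      by (simp add: lookup_add S.scale_left_distrib sum.distrib)
    also have "\<dots> = word_ext S f p + word_ext S f q"
      by (subst (1 2) word_ext_superset[OF assms]) auto
    finally show "word_ext S f (p + q) = word_ext S f p + word_ext S f q" .
  next
    fix c and p :: "'g list \<Rightarrow>\<^sub>0 'k"
    have "word_ext S f (fsmul c p)
        = (\<Sum>w\<in>Poly_Mapping.keys p. S (Poly_Mapping.lookup (fsmul c p) w) (f w))"
      by (rule word_ext_superset[OF assms]) (auto simp: in_keys_iff)
    then show "word_ext S f (fsmul c p) = S c (word_ext S f p)"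
      by (simp add: word_ext_def S.scale_sum_right)
  qed
qed

interpretation word_ext: module_hom fsmul fsmul "word_ext fsmul f" for f
  by (rule module_hom_word_ext[OF fsmul.module_axioms])

lemma word_ext_fw [simp]: "module S \<Longrightarrow> word_ext S f (fw w) = f w"
  unfolding word_ext_def by (simp add: lookup_fw module.scale_one)

lemma word_ext_compose:
  assumes "module_hom fsmul S F"
  shows "F (word_ext fsmul h p) = word_ext S (\<lambda>w. F (h w)) p"
proof -
  interpret module_hom fsmul S F by fact
  show ?thesis unfolding word_ext_def by (simp add: sum scale)
qed

lemma word_ext_diff_fun: "word_ext fsmul f p - word_ext fsmul g p = word_ext fsmul (\<lambda>w. f w - g w) p"
  unfolding word_ext_def by (simp add: sum_subtractf fsmul.scale_right_diff_distrib)

definition prepend :: "'g list \<Rightarrow> ('g list \<Rightarrow>\<^sub>0 'k::comm_ring_1) \<Rightarrow> ('g list \<Rightarrow>\<^sub>0 'k)"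
  where "prepend u = word_ext fsmul (\<lambda>w. fw (u @ w))"

interpretation prepend: module_hom fsmul fsmul "prepend u" for u
  unfolding prepend_def by unfold_locales

lemma prepend_fw [simp]: "prepend u (fw w) = fw (u @ w)"
  by (simp add: prepend_def fsmul.module_axioms)

lemma fmul_fw_left: "fmul (fw u) p = prepend u p"
  unfolding fmul_def prepend_def word_ext_def by (simp add: lookup_fw fsmul_fw)

lemma fmul_fw_right: "fmul p (fw v) = word_ext fsmul (\<lambda>w. fw (w @ v)) p"
  unfolding fmul_def word_ext_def by (simp add: lookup_fw fsmul_fw)

lemma fmul_sandwich: "fmul (fmul (fw u) p) (fw v) = word_ext fsmul (\<lambda>w. fw (u @ w @ v)) p"
  unfolding fmul_fw_right fmul_fw_left prepend_def word_ext_compose[OF word_ext.module_hom_axioms]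
  by (simp add: fsmul.module_axioms)

section \<open>The defining ideal of the enveloping algebra\<close>

locale enveloping =
  fixes sc :: "'k::field \<Rightarrow> 'g::ab_group_add \<Rightarrow> 'g" and br :: "'g \<Rightarrow> 'g \<Rightarrow> 'g"
begin

lemma env_ideal_add: "p \<in> env_ideal sc br \<Longrightarrow> q \<in> env_ideal sc br \<Longrightarrow> p + q \<in> env_ideal sc br"
  by (simp add: env_ideal_def fsmul.span_add)

lemma env_ideal_diff: "p \<in> env_ideal sc br \<Longrightarrow> q \<in> env_ideal sc br \<Longrightarrow> p - q \<in> env_ideal sc br"
  by (simp add: env_ideal_def fsmul.span_diff)

lemma env_ideal_scale: "p \<in> env_ideal sc br \<Longrightarrow> fsmul c p \<in> env_ideal sc br"
  by (simp add: env_ideal_def fsmul.span_scale)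

lemma env_ideal_zero: "0 \<in> env_ideal sc br"
  by (simp add: env_ideal_def fsmul.span_zero)

lemma env_ideal_sum: "(\<And>i. i \<in> A \<Longrightarrow> f i \<in> env_ideal sc br) \<Longrightarrow> sum f A \<in> env_ideal sc br"
  by (simp add: env_ideal_def fsmul.span_sum)

lemma env_ideal_trans:
  "p - q \<in> env_ideal sc br \<Longrightarrow> q - r \<in> env_ideal sc br \<Longrightarrow> p - r \<in> env_ideal sc br"
  using env_ideal_add by fastforce

lemma sandwich_env_gens: "g \<in> env_gens sc br \<Longrightarrow> word_ext fsmul (\<lambda>w. fw (u @ w @ v)) g \<in> env_ideal sc br"
  unfolding env_ideal_def fmul_sandwich[symmetric] by (intro fsmul.span_base) blast

lemma env_ideal_word_add: "fw (u @ [a + b] @ v) - fw (u @ [a] @ v) - fw (u @ [b] @ v) \<in> env_ideal sc br"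
proof -
  have "fw [a + b] - fw [a] - fw [b] \<in> env_gens sc br" unfolding env_gens_def by blast
  from sandwich_env_gens[OF this, of u v] show ?thesis by (simp add: word_ext.diff fsmul.module_axioms)
qed

lemma env_ideal_word_scale: "fw (u @ [sc c a] @ v) - fsmul c (fw (u @ [a] @ v)) \<in> env_ideal sc br"
proof -
  have "fw [sc c a] - fsmul c (fw [a]) \<in> env_gens sc br" unfolding env_gens_def by blast
  from sandwich_env_gens[OF this, of u v] show ?thesis
    by (simp add: word_ext.diff word_ext.scale fsmul.module_axioms)
qed

lemma env_ideal_word_swap:
  "fw (u @ [a, b] @ v) - fw (u @ [b, a] @ v) - fw (u @ [br a b] @ v) \<in> env_ideal sc br"
proof -
  have "fw [a, b] - fw [b, a] - fw [br a b] \<in> env_gens sc br" unfolding env_gens_def by blast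
  from sandwich_env_gens[OF this, of u v] show ?thesis by (simp add: word_ext.diff fsmul.module_axioms)
qed

lemma env_ideal_word_zero: "fw (u @ 0 # v) \<in> env_ideal sc br"
  using env_ideal_scale[OF env_ideal_word_add[of u 0 0 v], of "- 1"] by simp

lemma prepend_zero_env_ideal: "prepend [0] p \<in> env_ideal sc br"
  unfolding prepend_def word_ext_def using env_ideal_word_zero[of "[]"]
  by (intro env_ideal_sum env_ideal_scale) simp

lemma prepend_env_ideal:
  assumes "p \<in> env_ideal sc br"
  shows "prepend u p \<in> env_ideal sc br"
proof -
  have "p \<in> prepend u -` env_ideal sc br"
    using assms unfolding env_ideal_def fmul_sandwich
  proof (induction rule: fsmul.span_induct)
    case base
    show ?case using prepend.subspace_vimage[OF fsmul.subspace_span] by (simp add: vimage_def)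
  next
    case (step q)
    then obtain u' v g where "q = word_ext fsmul (\<lambda>w. fw (u' @ w @ v)) g" "g \<in> env_gens sc br"
      by blast
    with sandwich_env_gens[of g "u @ u'" v] show ?case
      by (simp add: prepend_def word_ext_compose[OF word_ext.module_hom_axioms] fsmul.module_axioms
          env_ideal_def fmul_sandwich)
  qed
  then show ?thesis by simp
qed

lemma word_ext_env_ideal_cong:
  assumes "\<And>w. f w - g w \<in> env_ideal sc br"
  shows "word_ext fsmul f p - word_ext fsmul g p \<in> env_ideal sc br"
  unfolding word_ext_diff_fun unfolding word_ext_def
  using assms by (intro env_ideal_sum env_ideal_scale)

lemma prepend_letter_add_scale:
  "prepend [a + sc c b] p - (prepend [a] p + fsmul c (prepend [b] p)) \<in> env_ideal sc br"
proof -
  have "fw ([a + sc c b] @ w) - (fw ([a] @ w) + fsmul c (fw ([b] @ w))) \<in> env_ideal sc br" for w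
    using env_ideal_add[OF env_ideal_word_add[of "[]" a "sc c b" w] env_ideal_word_scale[of "[]" c b w]]
    by (simp add: algebra_simps)
  then have "word_ext fsmul (\<lambda>w. fw ([a + sc c b] @ w)) p
      - word_ext fsmul (\<lambda>w. fw ([a] @ w) + fsmul c (fw ([b] @ w))) p \<in> env_ideal sc br"
    by (rule word_ext_env_ideal_cong)
  moreover have "word_ext fsmul (\<lambda>w. fw ([a] @ w) + fsmul c (fw ([b] @ w))) p
      = prepend [a] p + fsmul c (prepend [b] p)"
    unfolding prepend_def word_ext_def
    by (simp add: sum.distrib fsmul.scale_sum_right fsmul.scale_right_distrib mult.commute)
  ultimately show ?thesis by (simp add: prepend_def)
qed

end

section \<open>Lie algebras of nilindex 3 and the logarithm\<close>

locale nil3_lie_algebra = enveloping sc br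
  for sc :: "'k::field_char_0 \<Rightarrow> 'g::ab_group_add \<Rightarrow> 'g" and br +
  assumes lie_algebra: "lie_algebra sc br"
    and lcs_3: "lcs sc br 3 = {0}"
begin

sublocale vector_space sc
  using lie_algebra by (simp add: lie_algebra_def)

lemma br_add_left: "br (a + b) c = br a c + br b c"
  using lie_algebra by (simp add: lie_algebra_def)

lemma br_add_right: "br a (b + c) = br a b + br a c"
  using lie_algebra by (simp add: lie_algebra_def)

lemma br_scale_left: "br (sc t a) b = sc t (br a b)"
  using lie_algebra by (simp add: lie_algebra_def)

lemma br_scale_right: "br a (sc t b) = sc t (br a b)"
  using lie_algebra by (simp add: lie_algebra_def)

lemma br_self: "br a a = 0"
  using lie_algebra by (simp add: lie_algebra_def)

lemma br_zero_left [simp]: "br 0 a = 0"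
  using br_add_left[of 0 0 a] by simp

lemma br_zero_right [simp]: "br a 0 = 0"
  using br_add_right[of a 0 0] by simp

lemma br_antisym: "br a b = - br b a"
proof -
  have "br a b + br b a = br (a + b) (a + b)"
    by (simp only: br_add_left br_add_right) (simp add: br_self)
  also have "\<dots> = 0" by (rule br_self)
  finally
  show ?thesis by (simp add: eq_neg_iff_add_eq_0)
qed

lemma lcs_Suc_subset: "lcs sc br (Suc n) \<subseteq> lcs sc br n"
proof (induction n)
  case (Suc n)
  then show ?case
    by (cases n) (simp_all, rule span_mono, blast)
qed simp

lemma lcs_antimono: "m \<le> n \<Longrightarrow> lcs sc br n \<subseteq> lcs sc br m"
  by (induction n rule: dec_induct) (use lcs_Suc_subset in auto)

lemma br_in_lcs_2: "br a b \<in> lcs sc br 2"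
  by (simp add: numeral_2_eq_2) (intro span_base, blast)

lemma br_lcs_2_right: "y \<in> lcs sc br 2 \<Longrightarrow> br a y = 0"
proof -
  assume "y \<in> lcs sc br 2"
  then have "br a y \<in> lcs sc br 3"
    by (simp add: numeral_3_eq_3 numeral_2_eq_2) (intro span_base, auto)
  then show ?thesis using lcs_3 by simp
qed

lemma br_lcs_2_left: "y \<in> lcs sc br 2 \<Longrightarrow> br y a = 0"
  using br_lcs_2_right[of y a] br_antisym[of y a] by simp

fun log_word :: "'g list \<Rightarrow> 'g" where
  "log_word [a] = a"
| "log_word [a, b] = sc (1/2) (br a b)"
| "log_word _ = 0"

(* The value [a, b]/2 on ab is forced by the relation ab - ba = [a, b] together with
   log (exp y) = y, which requires the square y y to map to 0. *)
definition log3 :: "('g list \<Rightarrow>\<^sub>0 'k) \<Rightarrow> 'g" where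
  "log3 = word_ext sc log_word"

lemma module_sc: "module sc"
  by (simp add: module_iff_vector_space vector_space_axioms)

sublocale log3: module_hom fsmul sc log3
  unfolding log3_def by (rule module_hom_word_ext[OF module_sc])

lemma log_word_Cons_Cons [simp]: "log_word (a # b # w) = (if w = [] then sc (1/2) (br a b) else 0)"
  by (cases w) auto

lemma log_word_letter: "log_word (u @ a # v) =
   (if u = [] \<and> v = [] then a
    else if u = [] \<and> length v = 1 then sc (1/2) (br a (hd v))
    else if length u = 1 \<and> v = [] then sc (1/2) (br (hd u) a) else 0)"
proof (cases u)
  case Nil
  then show ?thesis by (cases v rule: log_word.cases) auto
next
  case (Cons p u')
  then show ?thesis by (cases u'; cases v) auto
qed

lemma log_word_pair: "log_word (u @ a # b # v) = (if u = [] \<and> v = [] then sc (1/2) (br a b) else 0)"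
  by (cases u rule: log_word.cases; cases v) auto

lemma log3_sandwich_env_gens:
  assumes "g \<in> env_gens sc br"
  shows "log3 (word_ext fsmul (\<lambda>w. fw (u @ w @ v)) g) = 0"
proof -
  have ext: "log3 (word_ext fsmul (\<lambda>w. fw (u @ w @ v)) g) = word_ext sc (\<lambda>w. log_word (u @ w @ v)) g"
    unfolding word_ext_compose[OF log3.module_hom_axioms] by (simp add: log3_def module_sc)
  interpret ext: module_hom fsmul sc "word_ext sc (\<lambda>w. log_word (u @ w @ v))"
    by (rule module_hom_word_ext[OF module_sc])
  from assms show ?thesis
    unfolding ext env_gens_def
  proof (elim UnE CollectE exE conjE)
    fix a b assume "g = fw [a + b] - fw [a] - fw [b]"
    then show "word_ext sc (\<lambda>w. log_word (u @ w @ v)) g = 0"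
      by (simp add: ext.diff module_sc log_word_letter br_add_left br_add_right scale_right_distrib)
  next
    fix t a assume "g = fw [sc t a] - fsmul t (fw [a])"
    then show "word_ext sc (\<lambda>w. log_word (u @ w @ v)) g = 0"
      by (simp add: ext.diff ext.scale module_sc log_word_letter br_scale_left br_scale_right
          mult.commute)
  next
    fix a b assume g: "g = fw [a, b] - fw [b, a] - fw [br a b]"
    have "sc (1/2) (br a b) + sc (1/2) (br a b) = br a b"
      using scale_left_distrib[of "1/2" "1/2" "br a b", symmetric] by simp
    then have "sc (1/2) (br a b) - sc (1/2) (br b a) - br a b = 0"
      using br_antisym[of b a] by (simp add: algebra_simps)
    with g show "word_ext sc (\<lambda>w. log_word (u @ w @ v)) g = 0"
      by (simp add: ext.diff module_sc log_word_pair log_word_letter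
          br_lcs_2_left[OF br_in_lcs_2] br_lcs_2_right[OF br_in_lcs_2])
  qed
qed

lemma log3_env_ideal: "p \<in> env_ideal sc br \<Longrightarrow> log3 p = 0"
  unfolding env_ideal_def fmul_sandwich
  by (rule log3.eq_0_on_span) (auto intro: log3_sandwich_env_gens)

lemma log3_filt_words_3:
  assumes "p \<in> filt_words sc br 3"
  shows "log3 p = 0"
  using assms unfolding filt_words_def
proof (rule log3.eq_0_on_span[rotated], elim CollectE exE conjE)
  fix q :: "'g list \<Rightarrow>\<^sub>0 'k" and w and ns :: "nat list"
  assume q: "q = fw w" and len: "length ns = length w"
    and mem: "\<forall>i<length w. w ! i \<in> lcs sc br (ns ! i)" and sum: "3 \<le> sum_list ns"
  consider a where "w = [a]" | a b where "w = [a, b]" | "w = []" | a b c w' where "w = a # b # c # w'"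
    by (cases w rule: log_word.cases) auto
  then show "log3 q = 0"
  proof cases
    case 1
    with len mem sum have "a \<in> lcs sc br 3"
      using lcs_antimono[of 3 "ns ! 0"] by (cases ns) auto
    with 1 q lcs_3 show ?thesis by (simp add: log3_def module_sc)
  next
    case 2
    with len obtain m n where ns: "ns = [m, n]" by (cases ns; cases "tl ns") auto
    with sum have "3 \<le> m + n" by simp
    then have "2 \<le> m \<or> 2 \<le> n" by linarith
    moreover have "a \<in> lcs sc br m" "b \<in> lcs sc br n" using mem 2 ns by auto
    ultimately have "br a b = 0"
      using lcs_antimono[of 2 m] lcs_antimono[of 2 n] br_lcs_2_left[of a b] br_lcs_2_right[of b a]
      by auto
    with 2 q show ?thesis by (simp add: log3_def module_sc)
  next
    case 3
    with len sum show ?thesis by simp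
  next
    case 4
    with q show ?thesis by (simp add: log3_def module_sc)
  qed
qed

lemma log3_exp_seq: "log3 (exp_seq y 3) = y"
  unfolding exp_seq_def log3.sum log3.scale by (simp add: log3_def module_sc numeral_3_eq_3 br_self)

lemma log_hat_eqI:
  assumes "\<And>n. eq_mod sc br n (exp_seq y n) (z n)"
  shows "log_hat sc br z = y"
  unfolding log_hat_def
proof (rule the_equality)
  have log3_z: "y' = log3 (z 3)" if "eq_mod sc br 3 (exp_seq y' 3) (z 3)" for y'
  proof -
    from that obtain a c where "a \<in> filt_words sc br 3" "c \<in> env_ideal sc br"
      and "exp_seq y' 3 - z 3 = a + c"
      unfolding eq_mod_def by blast
    then have "log3 (exp_seq y' 3 - z 3) = 0"
      by (simp add: log3.add log3_env_ideal log3_filt_words_3)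
    then show ?thesis by (simp add: log3.diff log3_exp_seq)
  qed
  show "\<forall>n. eq_mod sc br n (exp_seq y n) (z n)" using assms ..
  fix y' assume "\<forall>n. eq_mod sc br n (exp_seq y' n) (z n)"
  with assms show "y' = y" using log3_z by metis
qed

end

section \<open>Coefficient identities\<close>

definition exp_coeff :: "nat \<Rightarrow> nat \<Rightarrow> 'k::field_char_0" where
  "exp_coeff j m = (- 1 / 2) ^ m / (fact j * fact m)"

definition pairing_coeff :: "nat \<Rightarrow> 'k::field_char_0" where
  "pairing_coeff m = fact (2 * m) / fact m * (- 1 / 2) ^ m"

lemma pairing_coeff_0 [simp]: "pairing_coeff 0 = 1"
  by (simp add: pairing_coeff_def)

lemma pairing_coeff_Suc:
  "pairing_coeff (Suc m) = - of_nat (2 * m + 1) * (pairing_coeff m :: 'k::field_char_0)"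
proof -
  have "(fact (2 * Suc m) :: 'k) = of_nat (Suc m) * (2 * of_nat (2 * m + 1) * fact (2 * m))"
    by (simp add: algebra_simps)
  moreover have "(fact (Suc m) :: 'k) = of_nat (Suc m) * fact m"
    by simp
  ultimately show ?thesis
    unfolding pairing_coeff_def by (simp del: fact_Suc of_nat_Suc)
qed

(* As pairing_coeff m = (-1)^m (2m - 1)!!, calR_coeff a m is the coefficient of t^(a - 2m)
   in the probabilists' Hermite polynomial He_a(t). *)
definition calR_coeff :: "nat \<Rightarrow> nat \<Rightarrow> 'k::field_char_0" where
  "calR_coeff a m = of_nat (a choose (2 * m)) * pairing_coeff m"

lemma calR_coeff_0 [simp]: "calR_coeff a 0 = 1"
  by (simp add: calR_coeff_def)

lemma calR_coeff_eq_0: "a < 2 * m \<Longrightarrow> calR_coeff a m = 0"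
  by (simp add: calR_coeff_def binomial_eq_0)

lemma calR_coeff_Suc_Suc:
  "(calR_coeff (Suc a) (Suc m) :: 'k::field_char_0)
     = calR_coeff a (Suc m) - of_nat a * calR_coeff (a - 1) m"
proof -
  have absorb: "of_nat a * of_nat ((a - 1) choose (2 * m))
      = (of_nat (2 * m + 1) * of_nat (a choose Suc (2 * m)) :: 'k)"
    by (metis binomial_absorption Suc_eq_plus1 add.commute of_nat_mult)
  have "calR_coeff (Suc a) (Suc m) = (of_nat (a choose Suc (2 * m)) + of_nat (a choose (2 * Suc m)))
      * (pairing_coeff (Suc m) :: 'k)"
    by (simp add: calR_coeff_def)
  also have "\<dots> = calR_coeff a (Suc m)
      - of_nat (2 * m + 1) * of_nat (a choose Suc (2 * m)) * pairing_coeff m"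
    by (simp add: calR_coeff_def pairing_coeff_Suc algebra_simps)
  also have "\<dots> = calR_coeff a (Suc m) - of_nat a * calR_coeff (a - 1) m"
    by (simp only: calR_coeff_def mult.assoc[symmetric] absorb)
  finally show ?thesis .
qed

lemma calR_coeff_div_fact:
  "2 * m \<le> a \<Longrightarrow> calR_coeff a m / fact a = (exp_coeff (a - 2 * m) m :: 'k::field_char_0)"
  unfolding calR_coeff_def pairing_coeff_def exp_coeff_def binomial_fact by (simp add: field_simps)

definition binomial_coeff :: "nat \<Rightarrow> nat \<Rightarrow> 'k::field_char_0" where
  "binomial_coeff k m = of_nat (k choose m) * (- 1 / 2) ^ m"

lemma binomial_coeff_Suc_Suc:
  "(binomial_coeff (Suc k) (Suc m) :: 'k::field_char_0)
     = binomial_coeff k (Suc m) + (- 1 / 2) * binomial_coeff k m"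
  unfolding binomial_coeff_def by (simp add: algebra_simps)

lemma binomial_coeff_div_fact:
  "m \<le> k \<Longrightarrow> binomial_coeff k m / fact k = (exp_coeff (k - m) m :: 'k::field_char_0)"
  unfolding binomial_coeff_def exp_coeff_def binomial_fact by (simp add: field_simps)

section \<open>The operator on words in x and [R x, x]\<close>

lemma count_list_update:
  "i < length xs \<Longrightarrow> count_list (xs[i := y]) z
     = count_list xs z - (if xs ! i = z then 1 else 0) + (if y = z then 1 else 0)"
proof (induction xs arbitrary: i)
  case (Cons x xs)
  have "0 < count_list xs v" if "v \<in> set xs" for v
    using that count_list_0_iff by fastforce
  with Cons show ?case
    by (cases i) (auto simp: nth_mem)
qed simp

context module
begin

lemma sum_nth_eq_scale_count:
  "(\<Sum>i<length xs. if xs ! i = y then v else 0) = scale (of_nat (count_list xs y)) v"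
proof (induction xs)
  case (Cons x xs)
  then show ?case
    unfolding length_Cons sum.lessThan_Suc_shift by (simp add: scale_left_distrib)
qed simp

end

(* Tags for the letters x, [R x, x] and 0, which need not be distinct elements of g. *)
datatype tag = Tx | Tk | T0

definition bracket_tag :: "tag \<Rightarrow> tag \<Rightarrow> tag" where
  "bracket_tag t t' = (if t = Tx \<and> t' = Tx then Tk else T0)"

lemma T0_in_set_update_bracket_tag:
  assumes "i < length ts" "T0 \<in> set ts \<or> t \<noteq> Tx"
  shows "T0 \<in> set (ts[i := bracket_tag t (ts ! i)])"
proof (cases "t = Tx")
  case False
  with assms show ?thesis by (simp add: bracket_tag_def set_update_memI)
next
  case True
  with assms obtain j where j: "j < length ts" "ts ! j = T0" by (auto simp: in_set_conv_nth)
  with assms show ?thesis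
    by (cases "j = i")
      (auto simp: bracket_tag_def set_update_memI in_set_conv_nth nth_list_update intro!: exI[of _ j])
qed

locale nil3_calR_exp = nil3_lie_algebra sc br
  for sc :: "'k::field_char_0 \<Rightarrow> 'g::ab_group_add \<Rightarrow> 'g" and br +
  fixes R :: "'g \<Rightarrow> 'g" and x :: 'g
  assumes R_lcs: "\<And>n. R ` lcs sc br n \<subseteq> lcs sc br n"
begin

definition \<rho> where "\<rho> = R x"
definition \<kappa> where "\<kappa> = br (R x) x"
definition \<sigma> where "\<sigma> = R \<kappa>"

lemma R_zero: "R 0 = 0"
  using R_lcs[of 3] lcs_3 by auto

lemma \<kappa>_lcs_2: "\<kappa> \<in> lcs sc br 2"
  unfolding \<kappa>_def by (rule br_in_lcs_2)

lemma \<sigma>_lcs_2: "\<sigma> \<in> lcs sc br 2"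
  using R_lcs \<kappa>_lcs_2 unfolding \<sigma>_def by blast

primrec tag_letter :: "tag \<Rightarrow> 'g" where
  "tag_letter Tx = x" | "tag_letter Tk = \<kappa>" | "tag_letter T0 = 0"

lemma br_R_tag_letter: "br (R (tag_letter t)) (tag_letter t') = tag_letter (bracket_tag t t')"
  by (cases t; cases t')
    (auto simp: bracket_tag_def R_zero br_lcs_2_right[OF \<kappa>_lcs_2] br_lcs_2_left[OF \<sigma>_lcs_2]
      \<sigma>_def[symmetric] \<kappa>_def[symmetric])

definition rs_monomial :: "nat \<Rightarrow> nat \<Rightarrow> 'g list \<Rightarrow>\<^sub>0 'k" where
  "rs_monomial j m = fw (replicate j \<rho> @ replicate m \<sigma>)"

lemma prepend_\<rho>_rs_monomial: "prepend [\<rho>] (rs_monomial j m) = rs_monomial (Suc j) m"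
  by (simp add: rs_monomial_def)

lemma \<sigma>_commute_\<rho>_power:
  "fw (u @ \<sigma> # replicate j \<rho> @ v) - fw (u @ replicate j \<rho> @ \<sigma> # v) \<in> env_ideal sc br"
proof (induction j arbitrary: u)
  case (Suc j)
  have "fw (u @ [\<sigma>, \<rho>] @ replicate j \<rho> @ v) - fw (u @ [\<rho>, \<sigma>] @ replicate j \<rho> @ v) \<in> env_ideal sc br"
    using env_ideal_add[OF env_ideal_word_swap[of u \<sigma> \<rho> "replicate j \<rho> @ v"]
        env_ideal_word_zero[of u "replicate j \<rho> @ v"]]
    by (simp add: br_lcs_2_left[OF \<sigma>_lcs_2])
  moreover note Suc[of "u @ [\<rho>]"]
  ultimately show ?case by (simp add: env_ideal_trans[where q = "fw (u @ \<rho> # \<sigma> # replicate j \<rho> @ v)"])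
qed (simp add: env_ideal_zero)

lemma prepend_\<sigma>_rs_monomial: "prepend [\<sigma>] (rs_monomial j m) - rs_monomial j (Suc m) \<in> env_ideal sc br"
  using \<sigma>_commute_\<rho>_power[of "[]" j "replicate m \<sigma>"] by (simp add: rs_monomial_def)

(* The exponent a - 2 m is truncated only where the coefficient vanishes. *)
definition calR_term :: "nat \<Rightarrow> nat \<Rightarrow> nat \<Rightarrow> 'g list \<Rightarrow>\<^sub>0 'k" where
  "calR_term a m b = fsmul (calR_coeff a m) (rs_monomial (a - 2 * m) (m + b))"

definition calR_normal :: "nat \<Rightarrow> nat \<Rightarrow> 'g list \<Rightarrow>\<^sub>0 'k" where
  "calR_normal a b = (\<Sum>m<Suc a. calR_term a m b)"

lemma calR_normal_eq_sum: "a < N \<Longrightarrow> calR_normal a b = (\<Sum>m<N. calR_term a m b)"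
  unfolding calR_normal_def by (rule sum.mono_neutral_left) (auto simp: calR_term_def calR_coeff_eq_0)

lemma calR_term_Suc:
  "calR_term (Suc a) m b
     = prepend [\<rho>] (calR_term a m b)
       - fsmul (of_nat a) (if m = 0 then 0 else calR_term (a - 1) (m - 1) (Suc b))"
proof (cases m)
  case 0
  then show ?thesis by (simp add: calR_term_def prepend.scale prepend_\<rho>_rs_monomial)
next
  case (Suc m')
  have "fsmul (calR_coeff a m) (prepend [\<rho>] (rs_monomial (a - 2 * m) (m + b)))
      = fsmul (calR_coeff a m) (rs_monomial (Suc a - 2 * m) (m + b))"
    by (cases "2 * m \<le> a") (simp_all add: calR_coeff_eq_0 prepend_\<rho>_rs_monomial Suc_diff_le)
  moreover have "fsmul (of_nat a * calR_coeff (a - 1) m') (rs_monomial (a - 1 - 2 * m') (m' + Suc b))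
      = fsmul (of_nat a * calR_coeff (a - 1) m') (rs_monomial (Suc a - 2 * m) (m + b))"
    using Suc by (cases "a \<noteq> 0 \<and> 2 * m' \<le> a - 1") (auto simp: calR_coeff_eq_0)
  ultimately show ?thesis
    using Suc
    by (simp add: calR_term_def calR_coeff_Suc_Suc prepend.scale fsmul.scale_left_diff_distrib)
qed

lemma calR_normal_Suc:
  "calR_normal (Suc a) b
     = prepend [\<rho>] (calR_normal a b) - fsmul (of_nat a) (calR_normal (a - 1) (Suc b))"
proof -
  let ?N = "Suc (Suc a)"
  have "calR_normal (Suc a) b = (\<Sum>m<?N. calR_term (Suc a) m b)"
    by (rule calR_normal_eq_sum) simp
  also have "\<dots> = prepend [\<rho>] (\<Sum>m<?N. calR_term a m b)
      - fsmul (of_nat a) (\<Sum>m<?N. if m = 0 then 0 else calR_term (a - 1) (m - 1) (Suc b))"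
    by (simp only: calR_term_Suc sum_subtractf fsmul.scale_sum_right prepend.sum)
  also have "(\<Sum>m<?N. if m = 0 then 0 else calR_term (a - 1) (m - 1) (Suc b))
      = (\<Sum>m<Suc a. calR_term (a - 1) m (Suc b))"
    by (subst sum.lessThan_Suc_shift) simp
  finally show ?thesis
    by (simp only: calR_normal_eq_sum[symmetric] lessI less_SucI diff_le_self le_imp_less_Suc)
qed

lemma prepend_\<sigma>_calR_normal: "prepend [\<sigma>] (calR_normal a b) - calR_normal a (Suc b) \<in> env_ideal sc br"
proof -
  have "prepend [\<sigma>] (calR_normal a b) - calR_normal a (Suc b)
      = (\<Sum>m<Suc a. fsmul (calR_coeff a m)
          (prepend [\<sigma>] (rs_monomial (a - 2 * m) (m + b)) - rs_monomial (a - 2 * m) (Suc (m + b))))"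
    unfolding calR_normal_def calR_term_def prepend.sum prepend.scale
    by (simp add: sum_subtractf fsmul.scale_right_diff_distrib)
  also have "\<dots> \<in> env_ideal sc br"
    by (intro env_ideal_sum env_ideal_scale prepend_\<sigma>_rs_monomial)
  finally show ?thesis .
qed

definition tag_value :: "tag list \<Rightarrow> 'g list \<Rightarrow>\<^sub>0 'k" where
  "tag_value ts = (if T0 \<in> set ts then 0 else calR_normal (count_list ts Tx) (count_list ts Tk))"

lemma tag_value_update_Tx:
  assumes "i < length ts" "T0 \<notin> set ts"
  shows "tag_value (ts[i := bracket_tag Tx (ts ! i)])
    = (if ts ! i = Tx then calR_normal (count_list ts Tx - 1) (Suc (count_list ts Tk)) else 0)"
proof (cases "ts ! i = Tx")
  case True
  have "set (ts[i := Tk]) \<subseteq> insert Tk (set ts)" by (rule set_update_subset_insert)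
  with assms True show ?thesis
    by (auto simp: tag_value_def bracket_tag_def count_list_update)
next
  case False
  with assms show ?thesis by (simp add: tag_value_def bracket_tag_def set_update_memI)
qed

lemma tag_value_Cons:
  "prepend [R (tag_letter t)] (tag_value ts)
     - (\<Sum>i<length ts. tag_value (ts[i := bracket_tag t (ts ! i)])) - tag_value (t # ts)
     \<in> env_ideal sc br"
proof (cases "T0 \<in> set (t # ts)")
  case True
  then have "tag_value (ts[i := bracket_tag t (ts ! i)]) = 0" if "i < length ts" for i
    using T0_in_set_update_bracket_tag[OF that] by (auto simp: tag_value_def)
  moreover have "prepend [R (tag_letter t)] (tag_value ts) \<in> env_ideal sc br"
  proof (cases "t = T0")
    case True
    then show ?thesis by (simp add: R_zero prepend_zero_env_ideal)
  next
    case False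
    with \<open>T0 \<in> set (t # ts)\<close> show ?thesis by (simp add: tag_value_def env_ideal_zero)
  qed
  ultimately show ?thesis using True by (simp add: tag_value_def)
next
  case False
  then have no_T0: "T0 \<notin> set ts" "t \<noteq> T0" by auto
  show ?thesis
  proof (cases t)
    case Tx
    have "(\<Sum>i<length ts. tag_value (ts[i := bracket_tag t (ts ! i)]))
        = fsmul (of_nat (count_list ts Tx))
            (calR_normal (count_list ts Tx - 1) (Suc (count_list ts Tk)))"
      using Tx no_T0 by (simp add: tag_value_update_Tx fsmul.sum_nth_eq_scale_count)
    with Tx no_T0 show ?thesis
      by (simp add: tag_value_def calR_normal_Suc \<rho>_def env_ideal_zero)
  next
    case Tk
    then have "tag_value (ts[i := bracket_tag t (ts ! i)]) = 0" if "i < length ts" for i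
      using T0_in_set_update_bracket_tag[OF that] by (simp add: tag_value_def)
    with Tk no_T0 show ?thesis
      using prepend_\<sigma>_calR_normal by (simp add: tag_value_def \<sigma>_def)
  qed (use no_T0 in simp)
qed

lemma calR_word_tags: "calR_word br R (map tag_letter ts) - tag_value ts \<in> env_ideal sc br"
proof (induction ts rule: length_induct)
  case (1 ts)
  show ?case
  proof (cases ts)
    case Nil
    then show ?thesis
      by (simp add: tag_value_def calR_word_def calR_normal_def calR_term_def rs_monomial_def
          env_ideal_zero)
  next
    case (Cons t ts')
    let ?upd = "\<lambda>i. ts'[i := bracket_tag t (ts' ! i)]"
    have "calR_word br R (map tag_letter ts)
        = prepend [R (tag_letter t)] (calR_word br R (map tag_letter ts'))
          - (\<Sum>i<length ts'. calR_word br R (map tag_letter (?upd i)))"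
      by (simp add: Cons calR_word_def fmul_fw_left br_R_tag_letter map_update)
    then have "calR_word br R (map tag_letter ts)
        - (prepend [R (tag_letter t)] (tag_value ts') - (\<Sum>i<length ts'. tag_value (?upd i)))
        = prepend [R (tag_letter t)] (calR_word br R (map tag_letter ts') - tag_value ts')
          - (\<Sum>i<length ts'. calR_word br R (map tag_letter (?upd i)) - tag_value (?upd i))"
      by (simp add: prepend.diff sum_subtractf algebra_simps)
    also have "\<dots> \<in> env_ideal sc br"
      using 1 Cons by (auto intro!: env_ideal_diff[OF prepend_env_ideal env_ideal_sum])
    finally show ?thesis
      by (rule env_ideal_trans) (use tag_value_Cons[of t ts'] Cons in simp)
  qed
qed

lemma calR_word_replicate: "calR_word br R (replicate k x) - calR_normal k 0 \<in> env_ideal sc br"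
proof -
  have "count_list (replicate k Tx) Tx = k" by (induction k) auto
  then show ?thesis
    using calR_word_tags[of "replicate k Tx"] by (simp add: tag_value_def map_replicate_const)
qed

definition binomial_term :: "nat \<Rightarrow> nat \<Rightarrow> 'g list \<Rightarrow>\<^sub>0 'k" where
  "binomial_term k m = fsmul (binomial_coeff k m) (rs_monomial (k - m) m)"

definition binomial_normal :: "nat \<Rightarrow> 'g list \<Rightarrow>\<^sub>0 'k" where
  "binomial_normal k = (\<Sum>m<Suc k. binomial_term k m)"

lemma binomial_normal_eq_sum: "k < N \<Longrightarrow> binomial_normal k = (\<Sum>m<N. binomial_term k m)"
  unfolding binomial_normal_def
  by (rule sum.mono_neutral_left) (auto simp: binomial_term_def binomial_coeff_def binomial_eq_0)

lemma binomial_term_Suc: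
  "binomial_term (Suc k) m = prepend [\<rho>] (binomial_term k m)
     + fsmul (- 1 / 2)
         (if m = 0 then 0 else fsmul (binomial_coeff k (m - 1)) (rs_monomial (Suc k - m) m))"
proof (cases m)
  case 0
  then show ?thesis by (simp add: binomial_term_def binomial_coeff_def prepend_\<rho>_rs_monomial)
next
  case (Suc m')
  have "fsmul (binomial_coeff k m) (prepend [\<rho>] (rs_monomial (k - m) m))
      = fsmul (binomial_coeff k m) (rs_monomial (Suc k - m) m)"
    by (cases "m \<le> k")
      (simp_all add: binomial_coeff_def prepend_\<rho>_rs_monomial Suc_diff_le binomial_eq_0)
  with Suc show ?thesis
    by (simp add: binomial_term_def binomial_coeff_Suc_Suc prepend.scale fsmul.scale_left_distrib
        fsmul.scale_left_diff_distrib)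
qed

lemma binomial_normal_Suc:
  "prepend [\<rho>] (binomial_normal k) + fsmul (- 1 / 2) (prepend [\<sigma>] (binomial_normal k))
     - binomial_normal (Suc k) \<in> env_ideal sc br"
proof -
  let ?N = "Suc (Suc k)"
  define shifted where "shifted = (\<Sum>m<Suc k. fsmul (binomial_coeff k m) (rs_monomial (k - m) (Suc m)))"
  have "prepend [\<sigma>] (binomial_normal k) - shifted
      = (\<Sum>m<Suc k. fsmul (binomial_coeff k m)
          (prepend [\<sigma>] (rs_monomial (k - m) m) - rs_monomial (k - m) (Suc m)))"
    unfolding binomial_normal_def binomial_term_def shifted_def prepend.sum prepend.scale
    by (simp add: sum_subtractf fsmul.scale_right_diff_distrib)
  also have "\<dots> \<in> env_ideal sc br"
    by (intro env_ideal_sum env_ideal_scale prepend_\<sigma>_rs_monomial)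
  finally have shifted: "prepend [\<sigma>] (binomial_normal k) - shifted \<in> env_ideal sc br" .
  have "binomial_normal (Suc k) = (\<Sum>m<?N. binomial_term (Suc k) m)"
    by (rule binomial_normal_eq_sum) simp
  also have "\<dots> = prepend [\<rho>] (\<Sum>m<?N. binomial_term k m) + fsmul (- 1 / 2)
      (\<Sum>m<?N. if m = 0 then 0 else fsmul (binomial_coeff k (m - 1)) (rs_monomial (Suc k - m) m))"
    by (simp only: binomial_term_Suc sum.distrib fsmul.scale_sum_right prepend.sum)
  also have "(\<Sum>m<?N. if m = 0 then 0 else fsmul (binomial_coeff k (m - 1)) (rs_monomial (Suc k - m) m))
      = shifted"
    unfolding shifted_def by (subst sum.lessThan_Suc_shift) simp
  also have "(\<Sum>m<?N. binomial_term k m) = binomial_normal k"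
    by (rule binomial_normal_eq_sum[symmetric]) simp
  finally have "prepend [\<rho>] (binomial_normal k) + fsmul (- 1 / 2) (prepend [\<sigma>] (binomial_normal k))
      - binomial_normal (Suc k) = fsmul (- 1 / 2) (prepend [\<sigma>] (binomial_normal k) - shifted)"
    by (simp add: fsmul.scale_right_diff_distrib)
  then show ?thesis using env_ideal_scale[OF shifted, of "- 1 / 2"] by (simp only:)
qed

section \<open>Comparison with the exponential\<close>

lemma replicate_binomial_normal:
  "fw (replicate k (\<rho> - sc (1/2) \<sigma>)) - binomial_normal k \<in> env_ideal sc br"
proof (induction k)
  case 0
  then show ?case
    by (simp add: binomial_normal_def binomial_term_def binomial_coeff_def rs_monomial_def
        env_ideal_zero)
next
  case (Suc k)
  let ?y = "\<rho> - sc (1/2) \<sigma>" and ?E = "binomial_normal k"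
  have "prepend [?y] (fw (replicate k ?y)) - prepend [?y] ?E \<in> env_ideal sc br"
    using prepend_env_ideal[OF Suc, of "[?y]"] by (simp add: prepend.diff)
  moreover have
    "prepend [?y] ?E - (prepend [\<rho>] ?E + fsmul (- 1 / 2) (prepend [\<sigma>] ?E)) \<in> env_ideal sc br"
    using prepend_letter_add_scale[of \<rho> "- 1 / 2" \<sigma> ?E] by (simp add: scale_minus_left)
  ultimately show ?case
    using binomial_normal_Suc[of k] by (auto intro: env_ideal_trans)
qed

lemma exp_seq_binomial_normal:
  "exp_seq (\<rho> - sc (1/2) \<sigma>) n - (\<Sum>k<n. fsmul (1 / fact k) (binomial_normal k)) \<in> env_ideal sc br"
proof -
  have "exp_seq (\<rho> - sc (1/2) \<sigma>) n - (\<Sum>k<n. fsmul (1 / fact k) (binomial_normal k))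
      = (\<Sum>k<n. fsmul (1 / fact k) (fw (replicate k (\<rho> - sc (1/2) \<sigma>)) - binomial_normal k))"
    unfolding exp_seq_def by (simp add: sum_subtractf fsmul.scale_right_diff_distrib)
  also have "\<dots> \<in> env_ideal sc br"
    by (intro env_ideal_sum env_ideal_scale replicate_binomial_normal)
  finally show ?thesis .
qed

lemma calR_exp_seq_calR_normal:
  "calR br R (exp_seq x n) - (\<Sum>k<n. fsmul (1 / fact k) (calR_normal k 0)) \<in> env_ideal sc br"
proof -
  have "calR br R (exp_seq x n) = word_ext fsmul (calR_word br R) (exp_seq x n)"
    by (simp add: calR_def word_ext_def)
  also have "\<dots> = (\<Sum>k<n. fsmul (1 / fact k) (calR_word br R (replicate k x)))"
    by (simp add: exp_seq_def word_ext.sum word_ext.scale fsmul.module_axioms)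
  finally have "calR br R (exp_seq x n) - (\<Sum>k<n. fsmul (1 / fact k) (calR_normal k 0))
      = (\<Sum>k<n. fsmul (1 / fact k) (calR_word br R (replicate k x) - calR_normal k 0))"
    by (simp add: sum_subtractf fsmul.scale_right_diff_distrib)
  also have "\<dots> \<in> env_ideal sc br"
    by (intro env_ideal_sum env_ideal_scale calR_word_replicate)
  finally show ?thesis .
qed

definition exp_term :: "nat \<Rightarrow> nat \<Rightarrow> 'g list \<Rightarrow>\<^sub>0 'k" where
  "exp_term j m = fsmul (exp_coeff j m) (rs_monomial j m)"

lemma sum_calR_normal:
  "(\<Sum>k<n. fsmul (1 / fact k) (calR_normal k 0)) = (\<Sum>(j, m) \<in> {(j, m). j + 2 * m < n}. exp_term j m)"
proof -
  have "(\<Sum>k<n. fsmul (1 / fact k) (calR_normal k 0))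
      = (\<Sum>k<n. \<Sum>m<Suc k. if 2 * m \<le> k then exp_term (k - 2 * m) m else 0)"
    unfolding calR_normal_def fsmul.scale_sum_right
    by (intro sum.cong refl)
      (auto simp: calR_term_def exp_term_def calR_coeff_eq_0 calR_coeff_div_fact[symmetric])
  also have "\<dots> = (\<Sum>(k, m) \<in> Sigma {..<n} (\<lambda>k. {..<Suc k}).
      if 2 * m \<le> k then exp_term (k - 2 * m) m else 0)"
    by (rule sum.Sigma) auto
  also have "\<dots> = (\<Sum>(k, m) \<in> {(k, m). k < n \<and> 2 * m \<le> k}. exp_term (k - 2 * m) m)"
    by (rule sum.mono_neutral_cong_right) (auto split: if_splits)
  also have "\<dots> = (\<Sum>(j, m) \<in> {(j, m). j + 2 * m < n}. exp_term j m)"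
    by (rule sum.reindex_bij_witness[where i = "\<lambda>(j, m). (j + 2 * m, m)"
          and j = "\<lambda>(k, m). (k - 2 * m, m)"]) auto
  finally show ?thesis .
qed

lemma sum_binomial_normal:
  "(\<Sum>k<n. fsmul (1 / fact k) (binomial_normal k)) = (\<Sum>(j, m) \<in> {(j, m). j + m < n}. exp_term j m)"
proof -
  have "(\<Sum>k<n. fsmul (1 / fact k) (binomial_normal k)) = (\<Sum>k<n. \<Sum>m<Suc k. exp_term (k - m) m)"
    unfolding binomial_normal_def binomial_term_def fsmul.scale_sum_right
    by (intro sum.cong refl) (simp add: binomial_coeff_div_fact[symmetric] exp_term_def)
  also have "\<dots> = (\<Sum>(k, m) \<in> Sigma {..<n} (\<lambda>k. {..<Suc k}). exp_term (k - m) m)"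
    by (rule sum.Sigma) auto
  also have "\<dots> = (\<Sum>(j, m) \<in> {(j, m). j + m < n}. exp_term j m)"
    by (rule sum.reindex_bij_witness[where i = "\<lambda>(j, m). (j + m, m)"
          and j = "\<lambda>(k, m). (k - m, m)"]) auto
  finally show ?thesis .
qed

lemma rs_monomial_filt_words: "n \<le> j + 2 * m \<Longrightarrow> rs_monomial j m \<in> filt_words sc br n"
  unfolding filt_words_def rs_monomial_def
proof (intro fsmul.span_base CollectI exI conjI)
  show "length (replicate j (1::nat) @ replicate m 2) = length (replicate j \<rho> @ replicate m \<sigma>)"
    by simp
  show "\<forall>i<length (replicate j \<rho> @ replicate m \<sigma>).
      (replicate j \<rho> @ replicate m \<sigma>) ! i \<in> lcs sc br ((replicate j 1 @ replicate m 2) ! i)"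
    using \<sigma>_lcs_2 by (auto simp: nth_append)
  show "n \<le> sum_list (replicate j 1 @ replicate m (2::nat))" if "n \<le> j + 2 * m"
    using that by (simp add: sum_list_replicate)
qed (rule refl)

lemma eq_mod_exp_calR: "eq_mod sc br n (exp_seq (\<rho> - sc (1/2) \<sigma>) n) (calR br R (exp_seq x n))"
proof -
  let ?low = "{(j, m). j + m < n}" and ?high = "{(j, m). j + 2 * m < n}"
  let ?A = "\<Sum>k<n. fsmul (1 / fact k) (binomial_normal k)"
    and ?B = "\<Sum>k<n. fsmul (1 / fact k) (calR_normal k 0)"
  let ?p = "exp_seq (\<rho> - sc (1/2) \<sigma>) n" and ?q = "calR br R (exp_seq x n)"
  have "?low \<subseteq> {..<n} \<times> {..<n}" by auto
  then have "finite ?low" by (rule finite_subset) simp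
  then have "?A - ?B = (\<Sum>(j, m) \<in> ?low - ?high. exp_term j m)"
    unfolding sum_binomial_normal sum_calR_normal by (subst sum.subset_diff[of ?high]) auto
  also have "\<dots> \<in> filt_words sc br n"
    unfolding filt_words_def
    by (rule fsmul.span_sum)
      (auto simp: exp_term_def intro!: fsmul.span_scale rs_monomial_filt_words[unfolded filt_words_def])
  finally have "?A - ?B \<in> filt_words sc br n" .
  moreover have "(?p - ?A) - (?q - ?B) \<in> env_ideal sc br"
    using exp_seq_binomial_normal calR_exp_seq_calR_normal by (rule env_ideal_diff)
  moreover have "?p - ?q = (?A - ?B) + ((?p - ?A) - (?q - ?B))"
    by simp
  ultimately show ?thesis
    unfolding eq_mod_def by blast
qed

end

theorem proposition4p15:
  fixes sc :: "'k::field_char_0 \<Rightarrow> 'g::ab_group_add \<Rightarrow> 'g"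
    and br :: "'g \<Rightarrow> 'g \<Rightarrow> 'g"
    and R :: "'g \<Rightarrow> 'g"
    and x :: 'g
  assumes "lie_algebra sc br"
    and "lcs sc br 3 = {0}"
    and "Vector_Spaces.linear sc sc R"
    and "rota_baxter_w1 br R"
    and "\<forall>n. R ` lcs sc br n \<subseteq> lcs sc br n"
  shows "log_hat sc br (calR_hat br R (exp_seq x :: nat \<Rightarrow> ('g list \<Rightarrow>\<^sub>0 'k)))
           = R x - sc (1/2) (R (br (R x) x))"
proof -
  interpret nil3_calR_exp sc br R x
    using assms(1,2,5) by unfold_locales auto
  have "R x - sc (1/2) (R (br (R x) x)) = \<rho> - sc (1/2) \<sigma>"
    by (simp add: \<rho>_def \<sigma>_def \<kappa>_def)
  then show ?thesis
    unfolding calR_hat_def by (simp add: log_hat_eqI eq_mod_exp_calR)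
qed

end
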